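(* Let $q\ge 4$ be a prime power. Let $\ell$ and $m$ be distinct lines of $PG(2,q)$, let $P=\ell\cap m$, let $Q$ be a point of $\ell$ different from $P$, and let $R,S,T$ be three distinct points of $m$ different from $P$. Then $A=(\ell\setminus\{P,Q\})\cup\{R,S,T\}$ is a minimal $(1,2)$-saturating set of size $q+2$ in $PG(2,q)$.
   Context: $PG(2,q)$ is the projective plane over $\mathbb{F}_q$. For a point set $A$, a secant of $A$ is a line $\ell$ with $|\ell\cap A|\ge2$, counted with multiplicity $\binom{|\ell\cap A|}{2}$. A set $A$ of points of $PG(2,q)$ is $(1,\mu)$-saturating if (M1) $A$ spans $PG(2,q)$, (M2) $A\neq PG(2,q)$, and (M3) every point not in $A$ lies on secants of $A$ whose multiplicities sum to at least $\mu$. A $(1,\mu)$-saturating set of size $n$ is minimal if it does not contain a $(1,\mu)$-saturating set of size $n-1$. *)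

theory Defs
  imports Main
begin

text \<open>The projective plane PG(2,q) over a finite field 'a with q = CARD('a).\<close>

type_synonym 'a vec3 = "'a \<times> 'a \<times> 'a"
type_synonym 'a pg_pt = "'a vec3 set"

definition pt_of :: "'a::field vec3 \<Rightarrow> 'a pg_pt" where
  "pt_of v = (case v of (x, y, z) \<Rightarrow> {(c * x, c * y, c * z) | c. c \<noteq> 0})"

definition pg_points :: "'a::field pg_pt set" where
  "pg_points = {pt_of v | v. v \<noteq> (0, 0, 0)}"

definition line_of :: "'a::field vec3 \<Rightarrow> 'a pg_pt set" where
  "line_of u = {p \<in> pg_points. \<forall>(x, y, z) \<in> p.
      (case u of (a, b, c) \<Rightarrow> a * x + b * y + c * z = 0)}"

definition pg_lines :: "'a::field pg_pt set set" where
  "pg_lines = {line_of u | u. u \<noteq> (0, 0, 0)}"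

text \<open>A spans PG(2,q) iff A is not contained in a line (the span of A is a
  proper subspace iff it lies in a hyperplane).\<close>
definition spans_plane :: "'a::field pg_pt set \<Rightarrow> bool" where
  "spans_plane A \<longleftrightarrow> \<not> (\<exists>L \<in> pg_lines. A \<subseteq> L)"

definition secant_mult :: "'a::{field,finite} pg_pt set \<Rightarrow> 'a pg_pt \<Rightarrow> nat" where
  "secant_mult A x = (\<Sum>L \<in> {L \<in> pg_lines. x \<in> L}. card (L \<inter> A) choose 2)"

definition saturating :: "nat \<Rightarrow> 'a::{field,finite} pg_pt set \<Rightarrow> bool" where
  "saturating \<mu> A \<longleftrightarrow> A \<subseteq> pg_points \<and> spans_plane A \<and> A \<noteq> pg_points \<and>
     (\<forall>x \<in> pg_points - A. secant_mult A x \<ge> \<mu>)"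

definition minimal_saturating :: "nat \<Rightarrow> nat \<Rightarrow> 'a::{field,finite} pg_pt set \<Rightarrow> bool" where
  "minimal_saturating \<mu> n A \<longleftrightarrow> saturating \<mu> A \<and> card A = n \<and>
     \<not> (\<exists>B \<subseteq> A. card B = n - 1 \<and> saturating \<mu> B)"

end

theory Submission
  imports Defs
begin

text \<open>Every point off \<open>l \<union> m\<close> is joined to \<open>R\<close>, \<open>S\<close>, \<open>T\<close> by three distinct lines, at
  most one of which passes through \<open>Q\<close>; each of the others meets \<open>l\<close> in a point of \<open>A\<close>,
  so the point lies on two secants. Points of \<open>l\<close> or \<open>m\<close> lie on a line containing at
  least three points of \<open>A\<close> (for \<open>l\<close> this needs \<open>q \<ge> 4\<close>). For minimality: after
  deleting one of \<open>R, S, T\<close>, that point is covered only by \<open>m\<close>, which now carries two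
  points; after deleting a point \<open>a\<close> of \<open>l\<close>, the point \<open>Y = aR \<inter> QS\<close> lies on the
  single secant \<open>YT\<close>, which carries at most two points.\<close>

section \<open>Coordinates\<close>

definition dot :: "'a::field vec3 \<Rightarrow> 'a vec3 \<Rightarrow> 'a" where
  "dot u v = (case u of (a, b, c) \<Rightarrow> case v of (x, y, z) \<Rightarrow> a * x + b * y + c * z)"

definition cross :: "'a::field vec3 \<Rightarrow> 'a vec3 \<Rightarrow> 'a vec3" where
  "cross u v = (case u of (a, b, c) \<Rightarrow> case v of (x, y, z) \<Rightarrow>
     (b * z - c * y, c * x - a * z, a * y - b * x))"

definition smul :: "'a::field \<Rightarrow> 'a vec3 \<Rightarrow> 'a vec3" where
  "smul k v = (case v of (x, y, z) \<Rightarrow> (k * x, k * y, k * z))"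

lemma pt_of_eq: "pt_of v = {smul c v | c. c \<noteq> 0}"
  by (cases v) (simp add: pt_of_def smul_def)

lemma line_of_eq: "line_of u = {p \<in> pg_points. \<forall>w \<in> p. dot u w = 0}"
  unfolding line_of_def dot_def by (auto split: prod.splits)

lemma dot_smul_right: "dot u (smul k v) = k * dot u v"
  by (cases u; cases v) (simp add: dot_def smul_def algebra_simps)

lemma smul_smul: "smul a (smul b v) = smul (a * b) v"
  by (cases v) (simp add: smul_def)

lemma smul_one: "smul 1 v = v"
  by (cases v) (simp add: smul_def)

lemma smul_eq_0_iff: "smul k v = (0, 0, 0) \<longleftrightarrow> k = 0 \<or> v = (0, 0, 0)"
  by (cases v) (auto simp: smul_def)

lemma dot_commute: "dot u v = dot v u"
  by (cases u; cases v) (simp add: dot_def algebra_simps)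

lemma dot_cross_left: "dot u (cross u v) = 0"
  and dot_cross_right: "dot v (cross u v) = 0"
  by (cases u; cases v; simp add: dot_def cross_def algebra_simps)+

lemma cross_smul_smul: "cross (smul k w) (smul k' w) = (0, 0, 0)"
  by (cases w) (simp add: smul_def cross_def algebra_simps)

lemma smul_if_cross_eq_0:
  assumes "cross u w = (0, 0, 0)" "w \<noteq> (0, 0, 0)"
  shows "\<exists>k. u = smul k w"
proof -
  obtain a b c where u: "u = (a, b, c)" by (cases u)
  obtain x y z where w: "w = (x, y, z)" by (cases w)
  have h: "b * z = c * y" "c * x = a * z" "a * y = b * x"
    using assms(1) by (auto simp: u w cross_def)
  consider "x \<noteq> 0" | "x = 0" "y \<noteq> 0" | "x = 0" "y = 0" "z \<noteq> 0"
    using assms(2) w by auto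
  then show ?thesis
  proof cases
    case 1
    then have "u = smul (a / x) w" using h by (simp add: u w smul_def field_simps)
    then show ?thesis by blast
  next
    case 2
    then have "u = smul (b / y) w" using h by (simp add: u w smul_def field_simps)
    then show ?thesis by blast
  next
    case 3
    then have "u = smul (c / z) w" using h by (simp add: u w smul_def field_simps)
    then show ?thesis by blast
  qed
qed

lemma cross_cross_eq_0:
  assumes "dot u v = 0" "dot u v' = 0"
  shows "cross u (cross v v') = (0, 0, 0)"
proof -
  obtain a b c where u: "u = (a, b, c)" by (cases u)
  obtain x y z where v: "v = (x, y, z)" by (cases v)
  obtain x' y' z' where v': "v' = (x', y', z')" by (cases v')
  have h: "a * x + b * y + c * z = 0" "a * x' + b * y' + c * z' = 0"
    using assms by (auto simp: u v v' dot_def)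
  have "b * (x * y' - y * x') - c * (z * x' - x * z')
      = x * (a * x' + b * y' + c * z') - x' * (a * x + b * y + c * z)"
    "c * (y * z' - z * y') - a * (x * y' - y * x')
      = y * (a * x' + b * y' + c * z') - y' * (a * x + b * y + c * z)"
    "a * (z * x' - x * z') - b * (y * z' - z * y')
      = z * (a * x' + b * y' + c * z') - z' * (a * x + b * y + c * z)"
    by (simp_all add: algebra_simps)
  then show ?thesis using h by (simp add: u v v' cross_def)
qed

section \<open>Points and lines of the projective plane\<close>

lemma mem_pt_of_iff: "w \<in> pt_of v \<longleftrightarrow> (\<exists>c. c \<noteq> 0 \<and> w = smul c v)"
  by (auto simp: pt_of_eq)

lemma mem_pt_of_self: "v \<in> pt_of v"
  using smul_one[of v] by (auto simp: mem_pt_of_iff intro!: exI[of _ 1])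

lemma pt_of_eq_if_mem:
  assumes "w \<in> pt_of v"
  shows "pt_of w = pt_of v"
proof -
  obtain c where c: "c \<noteq> 0" "w = smul c v" using assms by (auto simp: mem_pt_of_iff)
  show ?thesis
  proof (rule set_eqI)
    fix t
    show "t \<in> pt_of w \<longleftrightarrow> t \<in> pt_of v"
    proof
      assume "t \<in> pt_of w"
      then obtain d where "d \<noteq> 0" "t = smul d w" by (auto simp: mem_pt_of_iff)
      then show "t \<in> pt_of v" using c unfolding mem_pt_of_iff by (metis smul_smul mult_eq_0_iff)
    next
      assume "t \<in> pt_of v"
      then obtain d where d: "d \<noteq> 0" "t = smul d v" by (auto simp: mem_pt_of_iff)
      then have "t = smul (d / c) w" using c by (simp add: smul_smul)
      then show "t \<in> pt_of w" using c d unfolding mem_pt_of_iff by (metis divide_eq_0_iff)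
    qed
  qed
qed

lemma nonzero_if_mem_pt_of: "v \<noteq> (0, 0, 0) \<Longrightarrow> w \<in> pt_of v \<Longrightarrow> w \<noteq> (0, 0, 0)"
  by (auto simp: mem_pt_of_iff smul_eq_0_iff)

lemma pt_of_in_pg_points: "v \<noteq> (0, 0, 0) \<Longrightarrow> pt_of v \<in> pg_points"
  unfolding pg_points_def by blast

lemma pg_pointsE:
  assumes "p \<in> pg_points"
  obtains v where "v \<noteq> (0, 0, 0)" "p = pt_of v"
  using assms by (auto simp: pg_points_def)

lemma pg_linesE:
  assumes "L \<in> pg_lines"
  obtains u where "u \<noteq> (0, 0, 0)" "L = line_of u"
  using assms by (auto simp: pg_lines_def)

lemma pg_line_subset_pg_points: "L \<in> pg_lines \<Longrightarrow> L \<subseteq> pg_points"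
  by (auto simp: pg_lines_def line_of_eq)

lemma pt_of_in_line_of_iff:
  assumes "v \<noteq> (0, 0, 0)"
  shows "pt_of v \<in> line_of u \<longleftrightarrow> dot u v = 0"
proof -
  have "(\<forall>w \<in> pt_of v. dot u w = 0) \<longleftrightarrow> dot u v = 0"
    using mem_pt_of_self[of v] by (force simp: mem_pt_of_iff dot_smul_right)
  then show ?thesis unfolding line_of_eq using pt_of_in_pg_points[OF assms] by blast
qed

lemma pt_of_eq_iff_cross:
  assumes "v \<noteq> (0, 0, 0)" "w \<noteq> (0, 0, 0)"
  shows "pt_of v = pt_of w \<longleftrightarrow> cross w v = (0, 0, 0)"
proof
  assume "pt_of v = pt_of w"
  then have "w \<in> pt_of v" using mem_pt_of_self[of w] by simp
  then obtain c where "w = smul c v" by (auto simp: mem_pt_of_iff)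
  then show "cross w v = (0, 0, 0)"
    using cross_smul_smul[of c v 1] by (simp add: smul_one)
next
  assume "cross w v = (0, 0, 0)"
  then obtain k where k: "w = smul k v" using smul_if_cross_eq_0 assms by blast
  with assms have "w \<in> pt_of v" by (auto simp: mem_pt_of_iff smul_eq_0_iff)
  then show "pt_of v = pt_of w" using pt_of_eq_if_mem by metis
qed

lemma line_of_eq_if_cross_eq_0:
  assumes "u \<noteq> (0, 0, 0)" "u' \<noteq> (0, 0, 0)" "cross u u' = (0, 0, 0)"
  shows "line_of u = line_of u'"
proof -
  obtain k where k: "u = smul k u'" using smul_if_cross_eq_0 assms by blast
  with assms have "k \<noteq> 0" by (auto simp: smul_eq_0_iff)
  have "dot u w = k * dot u' w" for w
    using k by (cases w; cases u') (simp add: dot_def smul_def algebra_simps)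
  then show ?thesis using \<open>k \<noteq> 0\<close> unfolding line_of_eq by auto
qed

lemma cross_ne_0_if_pt_of_ne:
  assumes "v \<noteq> (0, 0, 0)" "v' \<noteq> (0, 0, 0)" "pt_of v \<noteq> pt_of v'"
  shows "cross v v' \<noteq> (0, 0, 0)"
  using pt_of_eq_iff_cross[OF assms(2,1)] assms(3) by auto

lemma pg_line_unique:
  assumes "L \<in> pg_lines" "L' \<in> pg_lines" "p \<in> L" "p' \<in> L" "p \<in> L'" "p' \<in> L'" "p \<noteq> p'"
  shows "L = L'"
proof -
  obtain u where u: "u \<noteq> (0, 0, 0)" "L = line_of u" using assms(1) by (rule pg_linesE)
  obtain u' where u': "u' \<noteq> (0, 0, 0)" "L' = line_of u'" using assms(2) by (rule pg_linesE)
  obtain v where v: "v \<noteq> (0, 0, 0)" "p = pt_of v"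
    using assms pg_line_subset_pg_points pg_pointsE by blast
  obtain v' where v': "v' \<noteq> (0, 0, 0)" "p' = pt_of v'"
    using assms pg_line_subset_pg_points pg_pointsE by blast
  have w: "cross v v' \<noteq> (0, 0, 0)" using cross_ne_0_if_pt_of_ne v v' assms(7) by blast
  have "dot u v = 0" "dot u v' = 0" "dot u' v = 0" "dot u' v' = 0"
    using assms u u' v v' pt_of_in_line_of_iff by blast+
  then have "cross u (cross v v') = (0, 0, 0)" "cross u' (cross v v') = (0, 0, 0)"
    using cross_cross_eq_0 by blast+
  then obtain k k' where "u = smul k (cross v v')" "u' = smul k' (cross v v')"
    using smul_if_cross_eq_0 w by blast
  then have "cross u u' = (0, 0, 0)" using cross_smul_smul by simp
  then show ?thesis using line_of_eq_if_cross_eq_0[OF u(1) u'(1)] u(2) u'(2) by simp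
qed

lemma card_inter_pg_lines_le_1:
  fixes L L' :: "'a::{field,finite} pg_pt set"
  assumes "L \<in> pg_lines" "L' \<in> pg_lines" "L \<noteq> L'"
  shows "card (L \<inter> L') \<le> 1"
  unfolding One_nat_def card_le_Suc0_iff_eq[OF finite]
  using pg_line_unique[OF assms(1,2)] assms(3) by blast

lemma pg_join:
  assumes "p \<in> pg_points" "p' \<in> pg_points" "p \<noteq> p'"
  obtains L where "L \<in> pg_lines" "p \<in> L" "p' \<in> L"
proof -
  obtain v where v: "v \<noteq> (0, 0, 0)" "p = pt_of v" using assms(1) by (rule pg_pointsE)
  obtain v' where v': "v' \<noteq> (0, 0, 0)" "p' = pt_of v'" using assms(2) by (rule pg_pointsE)
  have w: "cross v v' \<noteq> (0, 0, 0)" using cross_ne_0_if_pt_of_ne v v' assms(3) by blast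
  have "dot (cross v v') v = 0" "dot (cross v v') v' = 0"
    by (simp_all add: dot_commute[of "cross v v'"] dot_cross_left dot_cross_right)
  then have "p \<in> line_of (cross v v')" "p' \<in> line_of (cross v v')"
    using pt_of_in_line_of_iff v v' by blast+
  moreover have "line_of (cross v v') \<in> pg_lines" using w unfolding pg_lines_def by blast
  ultimately show ?thesis using that by blast
qed

lemma pg_meet:
  assumes "L \<in> pg_lines" "L' \<in> pg_lines" "L \<noteq> L'"
  obtains p where "p \<in> L" "p \<in> L'"
proof -
  obtain u where u: "u \<noteq> (0, 0, 0)" "L = line_of u" using assms(1) by (rule pg_linesE)
  obtain u' where u': "u' \<noteq> (0, 0, 0)" "L' = line_of u'" using assms(2) by (rule pg_linesE)
  have w: "cross u u' \<noteq> (0, 0, 0)" using line_of_eq_if_cross_eq_0 u u' assms(3) by blast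
  have "pt_of (cross u u') \<in> L" "pt_of (cross u u') \<in> L'"
    using pt_of_in_line_of_iff[OF w] dot_cross_left dot_cross_right u u' by simp_all
  then show ?thesis using that by blast
qed

lemma pg_joins_distinct:
  assumes "L1 \<in> pg_lines" "L2 \<in> pg_lines" "m \<in> pg_lines" "x \<in> L1" "x \<in> L2" "x \<notin> m"
    and "K1 \<in> L1" "K1 \<in> m" "K2 \<in> L2" "K2 \<in> m" "K1 \<noteq> K2"
  shows "L1 \<noteq> L2"
  using pg_line_unique[OF assms(1,3), of K1 K2] assms by auto

section \<open>Counting points on a line\<close>

lemma card_field_ge_2: "2 \<le> card (UNIV :: 'a::{field,finite} set)"
  using card_mono[of UNIV "{0::'a, 1}"] by simp

lemma card_pt_of:
  fixes v :: "'a::{field,finite} vec3"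
  assumes "v \<noteq> (0, 0, 0)"
  shows "card (pt_of v) = card (UNIV :: 'a set) - 1"
proof -
  have "pt_of v = (\<lambda>c. smul c v) ` (UNIV - {0})" by (auto simp: pt_of_eq)
  moreover have "inj_on (\<lambda>c. smul c v) (UNIV - {0})"
    using assms by (cases v) (auto simp: inj_on_def smul_def)
  ultimately show ?thesis by (simp add: card_image card_Diff_singleton)
qed

definition rot :: "'a vec3 \<Rightarrow> 'a vec3" where
  "rot v = (case v of (x, y, z) \<Rightarrow> (y, z, x))"

lemma rot_rot_rot: "rot (rot (rot v)) = v"
  by (cases v) (simp add: rot_def)

lemma dot_rot_rot: "dot (rot u) (rot v) = dot u v"
  by (cases u; cases v) (simp add: rot_def dot_def)

lemma card_kernel_rot:
  fixes u :: "'a::{field,finite} vec3"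
  shows "card {w. dot (rot u) w = 0} = card {w. dot u w = 0}"
proof -
  have "{w. dot (rot u) w = 0} = rot ` {w. dot u w = 0}"
  proof (intro equalityI subsetI)
    fix w assume "w \<in> {w. dot (rot u) w = 0}"
    then have "rot (rot w) \<in> {w. dot u w = 0}"
      using dot_rot_rot[of u "rot (rot w)"] by (simp add: rot_rot_rot)
    then show "w \<in> rot ` {w. dot u w = 0}" using rot_rot_rot[of w] by (metis image_eqI)
  qed (auto simp: dot_rot_rot)
  moreover have "inj_on rot {w. dot u w = 0}" by (metis inj_onI rot_rot_rot)
  ultimately show ?thesis by (simp add: card_image)
qed

lemma card_kernel_fst_ne_0:
  fixes a b c :: "'a::{field,finite}"
  assumes "a \<noteq> 0"
  shows "card {w. dot (a, b, c) w = 0} = card (UNIV :: 'a set) * card (UNIV :: 'a set)"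
proof -
  have "bij_betw (\<lambda>(y, z). (- (b * y + c * z) / a, y, z)) UNIV {w. dot (a, b, c) w = 0}"
    using assms
    by (auto simp: bij_betw_def inj_on_def image_iff dot_def field_simps eq_neg_iff_add_eq_0
        ac_simps intro!: exI[of _ "(_, _)"])
  then have "card (UNIV :: ('a \<times> 'a) set) = card {w. dot (a, b, c) w = 0}"
    by (rule bij_betw_same_card)
  then show ?thesis using card_cartesian_product[of "UNIV :: 'a set" "UNIV :: 'a set"] by simp
qed

lemma card_kernel:
  fixes u :: "'a::{field,finite} vec3"
  assumes "u \<noteq> (0, 0, 0)"
  shows "card {w. dot u w = 0} = card (UNIV :: 'a set) * card (UNIV :: 'a set)"
proof -
  obtain a b c where u: "u = (a, b, c)" by (cases u)
  consider "a \<noteq> 0" | "a = 0" "b \<noteq> 0" | "a = 0" "b = 0" "c \<noteq> 0" using assms u by auto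
  then show ?thesis
  proof cases
    case 1
    then show ?thesis using card_kernel_fst_ne_0 u by blast
  next
    case 2
    then show ?thesis using card_kernel_fst_ne_0[of b c 0] card_kernel_rot[of u]
      by (simp add: u rot_def)
  next
    case 3
    then show ?thesis using card_kernel_fst_ne_0[of c 0 0] card_kernel_rot[of u]
        card_kernel_rot[of "rot u"]
      by (simp add: u rot_def)
  qed
qed

text \<open>The vectors of the kernel of \<open>u\<close>, except \<open>0\<close>, are partitioned by the points of
  \<open>line_of u\<close> into classes of size \<open>q - 1\<close>, whence \<open>q\<^sup>2 - 1 = card L * (q - 1)\<close>.\<close>

lemma card_pg_line:
  fixes L :: "'a::{field,finite} pg_pt set"
  assumes "L \<in> pg_lines"
  shows "card L = card (UNIV :: 'a set) + 1"
proof -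
  let ?q = "card (UNIV :: 'a set)"
  obtain u where u: "u \<noteq> (0, 0, 0)" "L = line_of u" using assms by (rule pg_linesE)
  have pt: "\<exists>v. v \<noteq> (0, 0, 0) \<and> p = pt_of v" if "p \<in> L" for p
    using that assms pg_line_subset_pg_points pg_pointsE by blast
  have union: "\<Union>L = {w. dot u w = 0} - {(0, 0, 0)}"
  proof (intro equalityI subsetI)
    fix w assume "w \<in> \<Union>L"
    then obtain p where "p \<in> L" "w \<in> p" by blast
    then show "w \<in> {w. dot u w = 0} - {(0, 0, 0)}"
      using pt u nonzero_if_mem_pt_of unfolding line_of_eq by blast
  next
    fix w assume "w \<in> {w. dot u w = 0} - {(0, 0, 0)}"
    then have "pt_of w \<in> L" using pt_of_in_line_of_iff u by blast
    then show "w \<in> \<Union>L" using mem_pt_of_self by blast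
  qed
  have "pairwise disjnt L"
    unfolding pairwise_def disjnt_def using pt pt_of_eq_if_mem by blast
  then have "card (\<Union>L) = (\<Sum>p \<in> L. card p)" by (simp add: card_Union_disjoint)
  also have "\<dots> = (\<Sum>p \<in> L. ?q - 1)" using pt card_pt_of by (intro sum.cong) auto
  also have "\<dots> = card L * (?q - 1)" by simp
  finally have "card L * (?q - 1) = ?q * ?q - 1"
    unfolding union using card_kernel[OF u(1)] by (simp add: card_Diff_singleton dot_def)
  also have "\<dots> = (?q + 1) * (?q - 1)" by (simp add: algebra_simps)
  finally have "card L * (?q - 1) = (?q + 1) * (?q - 1)" .
  moreover have "?q - 1 \<noteq> 0" using card_field_ge_2[where 'a = 'a] by simp
  ultimately show ?thesis by (metis mult_right_cancel)
qed

section \<open>Secant multiplicities\<close>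

lemma secant_mult_ge_2_if_3_secant:
  fixes A :: "'a::{field,finite} pg_pt set"
  assumes "L \<in> pg_lines" "x \<in> L" "3 \<le> card (L \<inter> A)"
  shows "2 \<le> secant_mult A x"
proof -
  have "card (L \<inter> A) choose 2 \<le> secant_mult A x"
    unfolding secant_mult_def by (rule member_le_sum) (use assms in auto)
  moreover have "(3 choose 2 :: nat) \<le> card (L \<inter> A) choose 2"
    using assms(3) by (rule binomial_right_mono)
  ultimately show ?thesis by (simp add: numeral_eq_Suc)
qed

lemma secant_mult_ge_2_if_two_secants:
  fixes A :: "'a::{field,finite} pg_pt set"
  assumes "L1 \<in> pg_lines" "x \<in> L1" "2 \<le> card (L1 \<inter> A)"
    and "L2 \<in> pg_lines" "x \<in> L2" "2 \<le> card (L2 \<inter> A)" and "L1 \<noteq> L2"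
  shows "2 \<le> secant_mult A x"
proof -
  have "(\<Sum>L \<in> {L1, L2}. card (L \<inter> A) choose 2) \<le> secant_mult A x"
    unfolding secant_mult_def by (rule sum_mono2) (use assms in auto)
  moreover have "(\<Sum>L \<in> {L1, L2}. card (L \<inter> A) choose 2)
      = (card (L1 \<inter> A) choose 2) + (card (L2 \<inter> A) choose 2)"
    using assms(7) by simp
  moreover have "0 < card (L1 \<inter> A) choose 2" "0 < card (L2 \<inter> A) choose 2"
    using assms(3,6) by simp_all
  ultimately show ?thesis by linarith
qed

lemma secant_mult_le_1:
  fixes B :: "'a::{field,finite} pg_pt set"
  assumes "L0 \<in> pg_lines" "x \<in> L0" "card (L0 \<inter> B) \<le> 2"
    and "\<And>L. L \<in> pg_lines \<Longrightarrow> x \<in> L \<Longrightarrow> L \<noteq> L0 \<Longrightarrow> card (L \<inter> B) \<le> 1"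
  shows "secant_mult B x \<le> 1"
proof -
  let ?S = "{L \<in> pg_lines. x \<in> L}"
  have "secant_mult B x = (card (L0 \<inter> B) choose 2) + (\<Sum>L \<in> ?S - {L0}. card (L \<inter> B) choose 2)"
    unfolding secant_mult_def by (rule sum.remove) (use assms in auto)
  also have "(\<Sum>L \<in> ?S - {L0}. card (L \<inter> B) choose 2) = 0"
  proof (intro sum.neutral ballI)
    fix L assume "L \<in> ?S - {L0}"
    then have "card (L \<inter> B) < 2" using assms(4) by fastforce
    then show "card (L \<inter> B) choose 2 = 0" by (rule binomial_eq_0)
  qed
  also have "card (L0 \<inter> B) choose 2 \<le> 2 choose 2"
    using assms(3) by (rule binomial_right_mono)
  finally show ?thesis by simp
qed

lemma card_inter_le_2_if_subset_two_lines:
  fixes B :: "'a::{field,finite} pg_pt set"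
  assumes "L \<in> pg_lines" "l \<in> pg_lines" "m \<in> pg_lines" "L \<noteq> l" "L \<noteq> m" "B \<subseteq> l \<union> m"
  shows "card (L \<inter> B) \<le> 2"
proof -
  have "card (L \<inter> B) \<le> card (L \<inter> l \<union> L \<inter> m)" using assms(6) by (intro card_mono) auto
  also have "\<dots> \<le> card (L \<inter> l) + card (L \<inter> m)" by (rule card_Un_le)
  also have "\<dots> \<le> 2" using card_inter_pg_lines_le_1 assms(1-5) by (metis add_mono one_add_one)
  finally show ?thesis .
qed

lemma card_inter_le_1_if_subset_two_lines:
  fixes B :: "'a::{field,finite} pg_pt set"
  assumes "L \<in> pg_lines" "l \<in> pg_lines" "m \<in> pg_lines" "L \<noteq> l" "L \<noteq> m" "B \<subseteq> l \<union> m"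
    and "\<And>u v. u \<in> L \<inter> B \<inter> l \<Longrightarrow> v \<in> L \<inter> B \<inter> m \<Longrightarrow> u = v"
  shows "card (L \<inter> B) \<le> 1"
proof -
  have "u = v" if uv: "u \<in> L \<inter> B" "v \<in> L \<inter> B" for u v
  proof -
    have "u \<in> l \<or> u \<in> m" "v \<in> l \<or> v \<in> m" using uv assms(6) by auto
    then consider "u \<in> l" "v \<in> l" | "u \<in> m" "v \<in> m" | "u \<in> l" "v \<in> m" | "u \<in> m" "v \<in> l"
      by blast
    then show ?thesis
    proof cases
      case 1
      then show ?thesis using pg_line_unique[OF assms(1,2)] assms(4) uv by blast
    next
      case 2
      then show ?thesis using pg_line_unique[OF assms(1,3)] assms(5) uv by blast
    next
      case 3
      then show ?thesis using assms(7) uv by blast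
    next
      case 4
      then show ?thesis using assms(7) uv by (metis IntI)
    qed
  qed
  then show ?thesis unfolding One_nat_def card_le_Suc0_iff_eq[OF finite] by blast
qed

lemma minimal_saturatingI:
  fixes A :: "'a::{field,finite} pg_pt set"
  assumes "saturating \<mu> A" "card A = n" "A \<noteq> {}"
    and "\<And>a. a \<in> A \<Longrightarrow> \<not> saturating \<mu> (A - {a})"
  shows "minimal_saturating \<mu> n A"
proof -
  have "\<not> saturating \<mu> B" if "B \<subseteq> A" "card B = n - 1" for B
  proof -
    have "0 < n" using assms(2,3) by auto
    then have "card (A - B) = 1" using that assms(2) by (simp add: card_Diff_subset)
    then obtain a where "A - B = {a}" by (rule card_1_singletonE)
    then have "B = A - {a}" "a \<in> A" using that(1) by auto
    then show ?thesis using assms(4) by blast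
  qed
  then show ?thesis unfolding minimal_saturating_def using assms(1,2) by blast
qed

section \<open>The configuration\<close>

locale two_lines_config =
  fixes l m :: "'a::{field,finite} pg_pt set" and P Q R S T :: "'a pg_pt"
  assumes l_line: "l \<in> pg_lines" and m_line: "m \<in> pg_lines" and l_neq_m: "l \<noteq> m"
    and P_l: "P \<in> l" and P_m: "P \<in> m" and Q_l: "Q \<in> l" and Q_neq_P: "Q \<noteq> P"
    and RST_m: "R \<in> m" "S \<in> m" "T \<in> m"
    and RST_distinct: "R \<noteq> S" "R \<noteq> T" "S \<noteq> T"
    and RST_neq_P: "R \<noteq> P" "S \<noteq> P" "T \<noteq> P"
begin

definition A :: "'a pg_pt set" where
  "A = (l - {P, Q}) \<union> {R, S, T}"

lemma l_inter_m: "z \<in> l \<Longrightarrow> z \<in> m \<Longrightarrow> z = P"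
  using pg_line_unique[OF l_line m_line] l_neq_m P_l P_m by blast

lemma RST_notin_l: "R \<notin> l" "S \<notin> l" "T \<notin> l"
  using l_inter_m RST_m RST_neq_P by blast+

lemma Q_notin_m: "Q \<notin> m"
  using l_inter_m Q_l Q_neq_P by blast

lemma Q_notin_A: "Q \<notin> A"
  using Q_notin_m RST_m by (auto simp: A_def)

lemma l_subset: "l \<subseteq> pg_points" and m_subset: "m \<subseteq> pg_points"
  using pg_line_subset_pg_points l_line m_line by auto

lemma mem_A_iff: "w \<in> A \<longleftrightarrow> w \<in> l \<and> w \<noteq> P \<and> w \<noteq> Q \<or> w \<in> {R, S, T}"
  unfolding A_def by auto

lemma A_subset: "A \<subseteq> l \<union> m"
  using RST_m by (auto simp: A_def)

lemma A_inter_l: "A \<inter> l = l - {P, Q}"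
  using RST_notin_l by (auto simp: A_def)

lemma A_inter_m: "A \<inter> m = {R, S, T}"
  using RST_m l_inter_m by (auto simp: A_def)

lemma card_l_minus_PQ: "card (l - {P, Q}) = card (UNIV :: 'a set) - 1"
  using card_pg_line[OF l_line] P_l Q_l Q_neq_P by (simp add: card_Diff_subset)

lemma card_A: "card A = card (UNIV :: 'a set) + 2"
proof -
  have "card A = card (l - {P, Q}) + card {R, S, T}"
    unfolding A_def by (rule card_Un_disjoint) (use RST_notin_l in auto)
  then show ?thesis
    using card_l_minus_PQ RST_distinct card_field_ge_2[where 'a = 'a] by simp
qed

lemma spans_plane_A:
  assumes "3 \<le> card (UNIV :: 'a set)"
  shows "spans_plane A"
  unfolding spans_plane_def
proof
  assume "\<exists>L \<in> pg_lines. A \<subseteq> L"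
  then obtain L where L: "L \<in> pg_lines" "A \<subseteq> L" by blast
  have "\<not> card (l - {P, Q}) \<le> Suc 0" using card_l_minus_PQ assms by simp
  then obtain a b where ab: "a \<in> l - {P, Q}" "b \<in> l - {P, Q}" "a \<noteq> b"
    unfolding card_le_Suc0_iff_eq[OF finite] by blast
  then have "a \<in> L" "b \<in> L" using L(2) unfolding A_def by blast+
  then have "L = l" using pg_line_unique[OF L(1) l_line, of a b] ab by blast
  moreover have "R \<in> L" using L(2) unfolding A_def by blast
  ultimately show False using RST_notin_l by blast
qed

lemma card_secant_through_RST:
  assumes "x \<notin> m" "K \<in> {R, S, T}" "L \<in> pg_lines" "x \<in> L" "K \<in> L" "Q \<notin> L"
  shows "2 \<le> card (L \<inter> A)"
proof -
  have K: "K \<in> m" "K \<notin> l" "K \<noteq> P" "K \<in> A"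
    using assms(2) RST_m RST_notin_l RST_neq_P by (auto simp: A_def)
  have "L \<noteq> l" using assms(5) K by auto
  then obtain Z where Z: "Z \<in> L" "Z \<in> l" using pg_meet[OF assms(3) l_line] by blast
  have "Z \<noteq> P"
  proof
    assume "Z = P"
    then have "L = m" using pg_line_unique[OF assms(3) m_line, of Z K] Z assms(5) K P_m by auto
    then show False using assms(1,4) by simp
  qed
  then have "{Z, K} \<subseteq> L \<inter> A" using Z assms(5,6) K by (auto simp: A_def)
  moreover have "Z \<noteq> K" using Z K by auto
  ultimately show ?thesis using card_mono[of "L \<inter> A" "{Z, K}"] by simp
qed

lemma secant_mult_A_ge_2:
  assumes "4 \<le> card (UNIV :: 'a set)" "x \<in> pg_points - A"
  shows "2 \<le> secant_mult A x"
proof -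
  consider (on_m) "x \<in> m" | (on_l) "x \<in> l" | (off) "x \<notin> l" "x \<notin> m" by blast
  then show ?thesis
  proof cases
    case on_m
    then show ?thesis
      using secant_mult_ge_2_if_3_secant[OF m_line] A_inter_m RST_distinct
      by (simp add: Int_commute)
  next
    case on_l
    then show ?thesis
      using secant_mult_ge_2_if_3_secant[OF l_line] A_inter_l card_l_minus_PQ assms(1)
      by (simp add: Int_commute)
  next
    case off
    have x: "x \<in> pg_points" using assms(2) by blast
    have RST: "R \<in> pg_points" "S \<in> pg_points" "T \<in> pg_points" "x \<noteq> R" "x \<noteq> S" "x \<noteq> T"
      using off RST_m m_subset by auto
    obtain LR where LR: "LR \<in> pg_lines" "x \<in> LR" "R \<in> LR" using pg_join[OF x] RST by blast
    obtain LS where LS: "LS \<in> pg_lines" "x \<in> LS" "S \<in> LS" using pg_join[OF x] RST by blast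
    obtain LT where LT: "LT \<in> pg_lines" "x \<in> LT" "T \<in> LT" using pg_join[OF x] RST by blast
    note distinct = pg_joins_distinct[OF _ _ m_line _ _ off(2)]
    have dRS: "LR \<noteq> LS" using distinct[OF LR(1) LS(1) LR(2) LS(2) LR(3)] LS(3) RST_m RST_distinct
      by blast
    have dRT: "LR \<noteq> LT" using distinct[OF LR(1) LT(1) LR(2) LT(2) LR(3)] LT(3) RST_m RST_distinct
      by blast
    have dST: "LS \<noteq> LT" using distinct[OF LS(1) LT(1) LS(2) LT(2) LS(3)] LT(3) RST_m RST_distinct
      by blast
    have sec: "2 \<le> card (L \<inter> A)" if "L \<in> {LR, LS, LT}" "Q \<notin> L" for L
      using that card_secant_through_RST[OF off(2)] LR LS LT by auto
    have "x \<noteq> Q" using off Q_l by auto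
    then have Q_once: "\<not> (Q \<in> L1 \<and> Q \<in> L2)"
      if "L1 \<in> pg_lines" "L2 \<in> pg_lines" "x \<in> L1" "x \<in> L2" "L1 \<noteq> L2" for L1 L2
      using pg_line_unique[OF that(1,2), of x Q] that by blast
    have "Q \<notin> LS \<and> Q \<notin> LT \<or> Q \<notin> LR \<and> Q \<notin> LT \<or> Q \<notin> LR \<and> Q \<notin> LS"
      using Q_once[OF LR(1) LS(1) LR(2) LS(2) dRS] Q_once[OF LR(1) LT(1) LR(2) LT(2) dRT]
        Q_once[OF LS(1) LT(1) LS(2) LT(2) dST]
      by blast
    then consider "Q \<notin> LS" "Q \<notin> LT" | "Q \<notin> LR" "Q \<notin> LT" | "Q \<notin> LR" "Q \<notin> LS"
      by blast
    then show ?thesis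
    proof cases
      case 1
      then show ?thesis
        using secant_mult_ge_2_if_two_secants[OF LS(1,2) _ LT(1,2) _ dST] sec by simp
    next
      case 2
      then show ?thesis
        using secant_mult_ge_2_if_two_secants[OF LR(1,2) _ LT(1,2) _ dRT] sec by simp
    next
      case 3
      then show ?thesis
        using secant_mult_ge_2_if_two_secants[OF LR(1,2) _ LS(1,2) _ dRS] sec by simp
    qed
  qed
qed

lemma saturating_A:
  assumes "4 \<le> card (UNIV :: 'a set)"
  shows "saturating 2 A"
proof -
  have "P \<in> pg_points - A" using l_subset P_l RST_notin_l by (auto simp: A_def)
  moreover have "A \<subseteq> pg_points" using A_subset l_subset m_subset by blast
  moreover have "spans_plane A" using spans_plane_A assms by simp
  ultimately show ?thesis
    unfolding saturating_def using secant_mult_A_ge_2[OF assms] by blast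
qed

lemma secant_mult_delete_RST:
  assumes "a \<in> {R, S, T}"
  shows "secant_mult (A - {a}) a \<le> 1"
proof (rule secant_mult_le_1[OF m_line])
  have a: "a \<in> m" "a \<notin> l" using assms RST_m RST_notin_l by auto
  then show "a \<in> m" by blast
  have "m \<inter> (A - {a}) = {R, S, T} - {a}" using A_inter_m by blast
  moreover have "card ({R, S, T} - {a}) = 2"
    using assms RST_distinct by (simp add: card_Diff_singleton)
  ultimately show "card (m \<inter> (A - {a})) \<le> 2" by simp
  fix L assume L: "L \<in> pg_lines" "a \<in> L" "L \<noteq> m"
  have "v = a" if "v \<in> L" "v \<in> m" for v
    using pg_line_unique[OF L(1) m_line, of a v] L a that by blast
  then have no_mixed: "u = v" if "u \<in> L \<inter> (A - {a}) \<inter> l" "v \<in> L \<inter> (A - {a}) \<inter> m" for u v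
    using that by blast
  have "L \<noteq> l" using L(2) a(2) by blast
  moreover have "A - {a} \<subseteq> l \<union> m" using A_subset by blast
  ultimately show "card (L \<inter> (A - {a})) \<le> 1"
    using card_inter_le_1_if_subset_two_lines[OF L(1) l_line m_line _ L(3) _ no_mixed] by blast
qed

text \<open>After deleting a point \<open>a\<close> of \<open>l\<close>, the point \<open>Y = aR \<inter> QS\<close> is off \<open>l \<union> m\<close>, and
  of the lines through \<open>Y\<close> only \<open>YT\<close> can meet both \<open>l\<close> and \<open>m\<close> in remaining points.\<close>

lemma secant_mult_delete_l:
  assumes a: "a \<in> l" "a \<noteq> P" "a \<noteq> Q"
  shows "\<exists>Y \<in> pg_points - (A - {a}). secant_mult (A - {a}) Y \<le> 1"
proof -
  let ?B = "A - {a}"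
  have "a \<notin> m" using a l_inter_m by blast
  have pts: "a \<in> pg_points" "Q \<in> pg_points" "R \<in> pg_points" "S \<in> pg_points" "T \<in> pg_points"
    using a Q_l RST_m l_subset m_subset by auto
  have "a \<noteq> R" "Q \<noteq> S" using a Q_l RST_notin_l by auto
  obtain L1 where L1: "L1 \<in> pg_lines" "a \<in> L1" "R \<in> L1"
    using pg_join[OF pts(1,3) \<open>a \<noteq> R\<close>] by blast
  obtain L2 where L2: "L2 \<in> pg_lines" "Q \<in> L2" "S \<in> L2"
    using pg_join[OF pts(2,4) \<open>Q \<noteq> S\<close>] by blast
  have "L1 \<noteq> l" "L2 \<noteq> l" using L1(3) L2(3) RST_notin_l by auto
  have L1_l: "z = a" if "z \<in> L1" "z \<in> l" for z
    using pg_line_unique[OF L1(1) l_line L1(2) that(1) a(1) that(2)] \<open>L1 \<noteq> l\<close> by blast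
  have L2_l: "z = Q" if "z \<in> L2" "z \<in> l" for z
    using pg_line_unique[OF L2(1) l_line L2(2) that(1) Q_l that(2)] \<open>L2 \<noteq> l\<close> by blast
  have "L1 \<noteq> L2" using L1_l[OF _ Q_l] L2(2) a(3) by blast
  then obtain Y where Y: "Y \<in> L1" "Y \<in> L2" using pg_meet[OF L1(1) L2(1)] by blast
  have "Y \<notin> l" using L1_l[OF Y(1)] L2_l[OF Y(2)] a(3) by blast
  have "Y \<notin> m"
  proof
    assume "Y \<in> m"
    have "L1 \<noteq> m" "L2 \<noteq> m" using L1(2) L2(2) \<open>a \<notin> m\<close> Q_notin_m by auto
    then have "Y = R" "Y = S"
      using pg_line_unique[OF L1(1) m_line Y(1) L1(3) \<open>Y \<in> m\<close> RST_m(1)]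
        pg_line_unique[OF L2(1) m_line Y(2) L2(3) \<open>Y \<in> m\<close> RST_m(2)] by blast+
    then show False using RST_distinct by simp
  qed
  have "Y \<in> pg_points" using Y(1) L1(1) pg_line_subset_pg_points by blast
  moreover have "Y \<notin> ?B" using \<open>Y \<notin> l\<close> \<open>Y \<notin> m\<close> A_subset by blast
  ultimately have Y_off: "Y \<in> pg_points - ?B" by blast
  have "Y \<noteq> T" using \<open>Y \<notin> m\<close> RST_m by auto
  then obtain L0 where L0: "L0 \<in> pg_lines" "Y \<in> L0" "T \<in> L0"
    using pg_join[OF \<open>Y \<in> pg_points\<close> pts(5)] by blast
  have B_sub: "?B \<subseteq> l \<union> m" using A_subset by blast
  have "secant_mult ?B Y \<le> 1"
  proof (rule secant_mult_le_1[OF L0(1,2)])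
    have "L0 \<noteq> l" "L0 \<noteq> m" using L0 RST_notin_l \<open>Y \<notin> m\<close> by auto
    then show "card (L0 \<inter> ?B) \<le> 2"
      using card_inter_le_2_if_subset_two_lines[OF L0(1) l_line m_line _ _ B_sub] by blast
  next
    fix L assume L: "L \<in> pg_lines" "Y \<in> L" "L \<noteq> L0"
    have through_Y: "L' = L" if "L' \<in> pg_lines" "Y \<in> L'" "K \<in> L'" "K \<in> L" "K \<in> m" for L' K
      using pg_line_unique[OF that(1) L(1) that(2) that(3) L(2) that(4)] that(5) \<open>Y \<notin> m\<close> by blast
    have no_mixed: False if u: "u \<in> L \<inter> ?B \<inter> l" and v: "v \<in> L \<inter> ?B \<inter> m" for u v
    proof -
      have "v \<in> {R, S, T}" using v A_inter_m by blast
      then consider "L = L1" | "L = L2" | "L = L0"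
        using through_Y[OF L1(1) Y(1) L1(3)] through_Y[OF L2(1) Y(2) L2(3)]
          through_Y[OF L0(1) L0(2) L0(3)] v RST_m by blast
      then show False
      proof cases
        case 1
        then show False using L1_l u by blast
      next
        case 2
        then show False using L2_l u Q_notin_A by blast
      next
        case 3
        then show False using L(3) by blast
      qed
    qed
    have "L \<noteq> l" "L \<noteq> m" using L(2) \<open>Y \<notin> l\<close> \<open>Y \<notin> m\<close> by auto
    then show "card (L \<inter> ?B) \<le> 1"
      using card_inter_le_1_if_subset_two_lines[OF L(1) l_line m_line _ _ B_sub] no_mixed by blast
  qed
  then show ?thesis using Y_off by blast
qed

lemma not_saturating_delete:
  assumes "a \<in> A"
  shows "\<not> saturating 2 (A - {a})"
proof -
  obtain y where "y \<in> pg_points - (A - {a})" "secant_mult (A - {a}) y \<le> 1"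
  proof (cases "a \<in> {R, S, T}")
    case True
    moreover have "a \<in> pg_points" using True RST_m m_subset by auto
    ultimately show ?thesis using that secant_mult_delete_RST by blast
  next
    case False
    then have "a \<in> l" "a \<noteq> P" "a \<noteq> Q" using assms mem_A_iff by blast+
    then show ?thesis using that secant_mult_delete_l by blast
  qed
  then show ?thesis unfolding saturating_def by (auto dest!: bspec)
qed

end

theorem theorem6p6:
  fixes l m :: "'a::{field,finite} pg_pt set" and P Q R S T :: "'a pg_pt"
  assumes "card (UNIV :: 'a set) \<ge> 4"
    and "l \<in> pg_lines" and "m \<in> pg_lines" and "l \<noteq> m"
    and "P \<in> l" and "P \<in> m"
    and "Q \<in> l" and "Q \<noteq> P"
    and "R \<in> m" and "S \<in> m" and "T \<in> m"
    and "R \<noteq> S" and "R \<noteq> T" and "S \<noteq> T"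
    and "R \<noteq> P" and "S \<noteq> P" and "T \<noteq> P"
  shows "minimal_saturating 2 (card (UNIV :: 'a set) + 2) ((l - {P, Q}) \<union> {R, S, T})"
proof -
  interpret two_lines_config l m P Q R S T
    using assms(2-) by unfold_locales
  have "A \<noteq> {}" using card_A by auto
  then have "minimal_saturating 2 (card (UNIV :: 'a set) + 2) A"
    using minimal_saturatingI saturating_A[OF assms(1)] card_A not_saturating_delete by blast
  then show ?thesis unfolding A_def .
qed

end
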